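(* Every compact topological manifold of dimension at least $2$ does not have the $\omega$-FTP property.
   Context: For continuous $f:X\to X$ and $x\in X$, $\omega_f(x)=\{y:\ \exists\, n_i\to+\infty,\ f^{n_i}(x)\to y\}$, which is totally periodic if all its points are periodic for $f$. A compact metric space $X$ has the $\omega$-FTP property if for every continuous $f:X\to X$, every totally periodic $\omega$-limit set of $f$ is finite. *)

theory Defs
  imports "HOL-Analysis.Analysis"
begin

definition omega_limit :: "('a::metric_space \<Rightarrow> 'a) \<Rightarrow> 'a \<Rightarrow> 'a set" where
  "omega_limit f x = {y. \<exists>r::nat \<Rightarrow> nat. strict_mono r \<and> ((\<lambda>i. (f ^^ (r i)) x) \<longlonglongrightarrow> y)}"

definition periodic_point :: "('a \<Rightarrow> 'a) \<Rightarrow> 'a \<Rightarrow> bool" where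
  "periodic_point f y \<longleftrightarrow> (\<exists>n>0. (f ^^ n) y = y)"

definition totally_periodic :: "('a \<Rightarrow> 'a) \<Rightarrow> 'a set \<Rightarrow> bool" where
  "totally_periodic f A \<longleftrightarrow> (\<forall>y\<in>A. periodic_point f y)"

definition omega_FTP :: "'a::metric_space set \<Rightarrow> bool" where
  "omega_FTP X \<longleftrightarrow>
     (\<forall>f. continuous_on X f \<and> f ` X \<subseteq> X \<longrightarrow>
        (\<forall>x\<in>X. totally_periodic f (omega_limit f x) \<longrightarrow> finite (omega_limit f x)))"

text \<open>X is a topological manifold (without boundary) of dimension CARD('n):
  every point has an open neighbourhood in X homeomorphic to an open subset of R^n.
  Hausdorffness is automatic in a metric space.\<close>
definition topological_manifold :: "'a::metric_space set \<Rightarrow> 'n::finite itself \<Rightarrow> bool" where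
  "topological_manifold X _ \<longleftrightarrow>
     (\<forall>x\<in>X. \<exists>U. openin (top_of_set X) U \<and> x \<in> U \<and>
        (\<exists>V::(real^'n) set. open V \<and> U homeomorphic V))"

end

theory Submission
  imports Defs
begin

text \<open>A manifold of dimension at least 2 contains an embedded closed disc D, and D is a retract
  of the whole space (Tietze). On D we take a spiral map that fixes the boundary circle pointwise
  and whose orbit of an interior point winds outwards, approaching the circle with angles
  increasing to infinity in steps tending to 0. Its \<omega>-limit set is the whole circle: infinite,
  yet consisting of fixed points. Conjugating with the embedding and composing with the
  retraction transfers this to a self-map of the manifold.\<close>

lemma subseq_tendsto_if_frequently_near:
  fixes u :: "nat \<Rightarrow> 'a::metric_space"
  assumes near: "\<And>\<epsilon> N. \<epsilon> > 0 \<Longrightarrow> \<exists>n\<ge>N. dist (u n) l < \<epsilon>"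
  obtains r where "strict_mono r" "(\<lambda>i. u (r i)) \<longlonglongrightarrow> l"
proof -
  have "\<forall>i j. \<exists>n>j. dist (u n) l < 1 / Suc i"
    using near[of "1 / Suc _" "Suc _"] by (auto simp: Suc_le_eq)
  then obtain s where s: "\<And>i j. s i j > j" "\<And>i j. dist (u (s i j)) l < 1 / Suc i"
    by (auto simp: choice_iff)
  define r where "r = rec_nat 0 s"
  have r_Suc: "r (Suc i) = s i (r i)" for i
    by (simp add: r_def)
  have "strict_mono r"
    by (simp add: strict_mono_Suc_iff r_Suc s(1))
  moreover have "(\<lambda>i. u (r (Suc i))) \<longlonglongrightarrow> l"
  proof (rule metric_LIMSEQ_I)
    fix \<epsilon> :: real assume "\<epsilon> > 0"
    then obtain N :: nat where N: "1 / Suc N < \<epsilon>"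
      using nat_approx_posE by blast
    have "dist (u (r (Suc i))) l < \<epsilon>" if "i \<ge> N" for i
    proof -
      have "1 / real (Suc i) \<le> 1 / Suc N" using that by (simp add: frac_le)
      then show ?thesis using s(2)[of i "r i"] N by (simp add: r_Suc)
    qed
    then show "\<exists>N. \<forall>i\<ge>N. dist (u (r (Suc i))) l < \<epsilon>" by blast
  qed
  then have "(\<lambda>i. u (r i)) \<longlonglongrightarrow> l"
    by (rule LIMSEQ_imp_Suc)
  ultimately show ?thesis by (rule that)
qed

lemma funpow_in_invariant:
  assumes "h ` S \<subseteq> S" "z \<in> S"
  shows "(h ^^ n) z \<in> S"
  by (induction n) (use assms in auto)

lemma funpow_semiconj:
  assumes "h ` S \<subseteq> S" "\<And>z. z \<in> S \<Longrightarrow> f (e z) = e (h z)" "z \<in> S"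
  shows "(f ^^ n) (e z) = e ((h ^^ n) z)"
proof (induction n)
  case (Suc n)
  then show ?case using assms(2)[OF funpow_in_invariant[OF assms(1,3)]] by simp
qed simp

lemma omega_limit_subset:
  assumes "closed S" "h ` S \<subseteq> S" "z \<in> S"
  shows "omega_limit h z \<subseteq> S"
proof
  fix y assume "y \<in> omega_limit h z"
  then obtain r where "(\<lambda>i. (h ^^ r i) z) \<longlonglongrightarrow> y"
    unfolding omega_limit_def by blast
  then show "y \<in> S"
    by (rule closed_sequentially[OF assms(1) funpow_in_invariant[OF assms(2,3)]])
qed

lemma omega_limit_semiconj:
  assumes S: "compact S" "h ` S \<subseteq> S" "z \<in> S"
    and e: "continuous_on S e" "\<And>z. z \<in> S \<Longrightarrow> f (e z) = e (h z)"
  shows "omega_limit f (e z) = e ` omega_limit h z"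
proof
  have orbit: "(h ^^ n) z \<in> S" "(f ^^ n) (e z) = e ((h ^^ n) z)" for n
    using funpow_in_invariant[OF S(2,3)] funpow_semiconj[of h S f e, OF S(2) e(2) S(3)] by auto
  have e_tendsto: "(\<lambda>i. e (v i)) \<longlonglongrightarrow> e y" if "v \<longlonglongrightarrow> y" "y \<in> S" "\<And>i. v i \<in> S" for v y
    using continuous_on_tendsto_compose[OF e(1) that(1,2)] that(3) by simp
  show "e ` omega_limit h z \<subseteq> omega_limit f (e z)"
  proof
    fix x assume "x \<in> e ` omega_limit h z"
    then obtain y where y: "x = e y" "y \<in> omega_limit h z" by blast
    then have "y \<in> S"
      using omega_limit_subset[OF compact_imp_closed[OF S(1)] S(2,3)] by blast
    with y show "x \<in> omega_limit f (e z)"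
      unfolding omega_limit_def using e_tendsto orbit by auto
  qed
  show "omega_limit f (e z) \<subseteq> e ` omega_limit h z"
  proof
    fix x assume "x \<in> omega_limit f (e z)"
    then obtain r where r: "strict_mono r" "(\<lambda>i. e ((h ^^ r i) z)) \<longlonglongrightarrow> x"
      unfolding omega_limit_def by (auto simp: orbit(2))
    obtain y s where y: "y \<in> S" "strict_mono s" "((\<lambda>i. (h ^^ r i) z) \<circ> s) \<longlonglongrightarrow> y"
      using seq_compactE[OF compact_imp_seq_compact[OF S(1)]] orbit(1) by metis
    then have "y \<in> omega_limit h z"
      unfolding omega_limit_def using strict_mono_o[OF r(1) y(2)] by (auto simp: comp_def)
    moreover have "((\<lambda>i. e ((h ^^ r i) z)) \<circ> s) \<longlonglongrightarrow> e y"
      using e_tendsto[OF y(3) y(1)] orbit(1) by (simp add: comp_def)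
    then have "x = e y"
      using LIMSEQ_unique[OF LIMSEQ_subseq_LIMSEQ[OF r(2) y(2)]] by blast
    ultimately show "x \<in> e ` omega_limit h z" by blast
  qed
qed

lemma not_omega_FTP_if_retract:
  fixes h :: "'b::metric_space \<Rightarrow> 'b" and X :: "'a::metric_space set"
  assumes S: "compact S" "continuous_on S h" "h ` S \<subseteq> S" "z \<in> S"
    and \<omega>: "infinite (omega_limit h z)" "totally_periodic h (omega_limit h z)"
    and e: "continuous_on S e" "e ` S \<subseteq> X"
    and \<psi>: "continuous_on X \<psi>" "\<psi> ` X \<subseteq> S" "\<And>z. z \<in> S \<Longrightarrow> \<psi> (e z) = z"
  shows "\<not> omega_FTP X"
proof -
  define f where "f = e \<circ> h \<circ> \<psi>"
  have "continuous_on X f"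
    unfolding f_def using \<psi>(1,2) S(2,3) e(1)
    by (metis continuous_on_compose continuous_on_subset image_comp image_mono order_trans)
  moreover have "f ` X \<subseteq> X"
    unfolding f_def using \<psi>(2) S(3) e(2) by (auto simp: image_subset_iff)
  moreover have semiconj: "f (e y) = e (h y)" if "y \<in> S" for y
    unfolding f_def using \<psi>(3)[OF that] by simp
  have \<omega>f: "omega_limit f (e z) = e ` omega_limit h z"
    by (rule omega_limit_semiconj[OF S(1,3,4) e(1) semiconj])
  have \<omega>S: "omega_limit h z \<subseteq> S"
    by (rule omega_limit_subset[OF compact_imp_closed[OF S(1)] S(3,4)])
  have "inj_on e S"
    by (metis \<psi>(3) inj_on_inverseI)
  then have "infinite (omega_limit f (e z))"
    unfolding \<omega>f using \<omega>(1) \<omega>S by (metis finite_imageD inj_on_subset)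
  moreover have "totally_periodic f (omega_limit f (e z))"
    unfolding totally_periodic_def periodic_point_def \<omega>f
  proof
    fix x assume "x \<in> e ` omega_limit h z"
    then obtain y n where y: "x = e y" "y \<in> S" "n > 0" "(h ^^ n) y = y"
      using \<omega>(2) \<omega>S unfolding totally_periodic_def periodic_point_def by blast
    then show "\<exists>n>0. (f ^^ n) x = x"
      using funpow_semiconj[of h S f e, OF S(3) semiconj y(2)] by auto
  qed
  moreover have "e z \<in> X" using e(2) S(4) by blast
  ultimately show ?thesis
    unfolding omega_FTP_def by blast
qed

lemma dist_cis_le: "dist (cis a) (cis b) \<le> \<bar>a - b\<bar>"
proof -
  have "cis a - cis b = cis b * (exp (\<i> * of_real (a - b)) - 1)"
    by (simp add: cis_conv_exp algebra_simps flip: exp_add)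
  then have "dist (cis a) (cis b) = norm (exp (\<i> * of_real (a - b)) - 1)"
    by (simp add: dist_norm norm_mult del: of_real_diff)
  also have "\<dots> = 2 * \<bar>sin ((a - b) / 2)\<bar>"
    by (rule dist_exp_i_1)
  also have "\<dots> \<le> \<bar>a - b\<bar>"
    using abs_sin_x_le_abs_x[of "(a - b) / 2"] by simp
  finally show ?thesis .
qed

lemma divergent_small_steps_near:
  fixes \<theta> :: "nat \<Rightarrow> real"
  assumes "filterlim \<theta> at_top sequentially" "\<epsilon> > 0"
    and steps: "\<And>n. n \<ge> M \<Longrightarrow> \<theta> (Suc n) - \<theta> n < \<epsilon>" and "\<theta> M \<le> T"
  shows "\<exists>n\<ge>M. \<bar>\<theta> n - T\<bar> < \<epsilon>"
proof -
  obtain n1 where "T \<le> \<theta> n1" "n1 \<ge> M"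
    using assms(1) unfolding filterlim_at_top eventually_sequentially by (meson nle_le)
  define n where "n = (LEAST n. M \<le> n \<and> T \<le> \<theta> n)"
  have n: "M \<le> n \<and> T \<le> \<theta> n"
    unfolding n_def by (rule LeastI[of _ n1]) (use \<open>T \<le> \<theta> n1\<close> \<open>n1 \<ge> M\<close> in blast)
  have "\<theta> n - T < \<epsilon>"
  proof (cases "n = M")
    case True then show ?thesis using assms(2,4) n by simp
  next
    case False
    then obtain p where p: "n = Suc p" "p \<ge> M" using n by (cases n) auto
    then have "\<not> (M \<le> p \<and> T \<le> \<theta> p)"
      using not_less_Least[of p "\<lambda>n. M \<le> n \<and> T \<le> \<theta> n"] unfolding n_def by auto
    then show ?thesis using steps[OF p(2)] p by simp
  qed
  then show ?thesis using n by (intro exI[of _ n]) auto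
qed

lemma cis_frequently_near:
  fixes \<theta> :: "nat \<Rightarrow> real"
  assumes "filterlim \<theta> at_top sequentially" "(\<lambda>n. \<theta> (Suc n) - \<theta> n) \<longlonglongrightarrow> 0" "\<epsilon> > 0"
  shows "\<exists>n\<ge>N. dist (cis (\<theta> n)) (cis a) < \<epsilon>"
proof -
  obtain M where M: "M \<ge> N" "\<And>n. n \<ge> M \<Longrightarrow> \<theta> (Suc n) - \<theta> n < \<epsilon>"
    using order_tendstoD(2)[OF assms(2,3)] unfolding eventually_sequentially
    by (metis le_trans nat_le_linear)
  define T where "T = a + 2 * pi * of_int \<lceil>(\<theta> M - a) / (2 * pi)\<rceil>"
  have "(\<theta> M - a) / (2 * pi) \<le> \<lceil>(\<theta> M - a) / (2 * pi)\<rceil>"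
    by (rule le_of_int_ceiling)
  then have "\<theta> M - a \<le> \<lceil>(\<theta> M - a) / (2 * pi)\<rceil> * (2 * pi)"
    by (subst (asm) pos_divide_le_eq) (use pi_gt_zero in auto)
  then have "\<theta> M \<le> T"
    unfolding T_def by (simp add: algebra_simps)
  then obtain n where n: "n \<ge> M" "\<bar>\<theta> n - T\<bar> < \<epsilon>"
    using divergent_small_steps_near[OF assms(1,3) M(2)] by blast
  have "cis T = cis a"
    by (simp add: T_def flip: cis_mult)
  then have "dist (cis (\<theta> n)) (cis a) < \<epsilon>"
    using dist_cis_le[of "\<theta> n" T] n(2) by simp
  then show ?thesis using n(1) M(1) by (intro exI[of _ n]) auto
qed

lemma infinite_unit_circle: "infinite (sphere (0::complex) 1)"
proof
  assume "finite (sphere (0::complex) 1)"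
  then obtain a where "sphere (0::complex) 1 = {a}"
    using connected_finite_iff_sing[OF connected_sphere[where 'a=complex]] by auto
  moreover have "1 \<in> sphere (0::complex) 1" "-1 \<in> sphere (0::complex) 1" by auto
  ultimately show False by auto
qed

text \<open>On the annulus 1/2 \<le> |z| \<le> 1 the spiral map sends the radius r to 1/(2 - r) and
  rotates by the angle 1 - r, so the orbit of 1/2 has radii (n+1)/(n+2) and its angles grow
  like the harmonic series, with steps tending to 0; the unit circle is fixed pointwise.\<close>

definition spiral_gain :: "real \<Rightarrow> real" where
  "spiral_gain r = 1 / (max r (1/2) * (2 - max r (1/2)))"

definition spiral :: "complex \<Rightarrow> complex" where
  "spiral z = z * of_real (spiral_gain (norm z)) * cis (1 - norm z)"

lemma spiral_fixes_circle: "norm z = 1 \<Longrightarrow> spiral z = z"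
  by (simp add: spiral_def spiral_gain_def)

lemma continuous_on_spiral: "continuous_on (cball 0 1) spiral"
proof -
  have "max (norm z) (1/2) * (2 - max (norm z) (1/2)) \<noteq> 0" if "z \<in> cball 0 1" for z :: complex
    using that by (auto simp: max_def)
  then show ?thesis
    unfolding spiral_def spiral_gain_def cis_conv_exp by (intro continuous_intros) auto
qed

lemma spiral_gain_pos: "r \<le> 1 \<Longrightarrow> spiral_gain r > 0"
  by (auto simp: spiral_gain_def max_def)

lemma norm_spiral: "norm z \<le> 1 \<Longrightarrow> norm (spiral z) = norm z * spiral_gain (norm z)"
  using spiral_gain_pos[of "norm z"] by (simp add: spiral_def norm_mult)

lemma spiral_maps_disc: "spiral ` cball 0 1 \<subseteq> cball 0 1"
proof
  fix w assume "w \<in> spiral ` cball 0 1"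
  then obtain z where z: "norm z \<le> 1" "w = spiral z" by auto
  have "norm z * spiral_gain (norm z) \<le> 1"
  proof (cases "norm z \<ge> 1/2")
    case True
    then have "norm z * spiral_gain (norm z) = 1 / (2 - norm z)"
      by (auto simp: spiral_gain_def)
    then show ?thesis using z(1) by simp
  next
    case False
    then show ?thesis by (simp add: spiral_gain_def)
  qed
  then show "w \<in> cball 0 1" using z by (simp add: norm_spiral)
qed

definition spiral_angle :: "nat \<Rightarrow> real" where
  "spiral_angle n = (\<Sum>k<n. 1 / (real k + 2))"

lemma spiral_orbit:
  "(spiral ^^ n) (1/2) = of_real (1 - 1 / (real n + 2)) * cis (spiral_angle n)"
proof (induction n)
  case (Suc n)
  define r :: real where "r = 1 - 1 / (real n + 2)"
  have r: "1/2 \<le> r" "r < 1"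
    by (auto simp: r_def field_simps)
  have "norm ((spiral ^^ n) (1/2)) = r"
    using r(1) by (simp add: Suc r_def[symmetric] norm_mult)
  then have "(spiral ^^ Suc n) (1/2)
      = of_real r * cis (spiral_angle n) * of_real (spiral_gain r) * cis (1 - r)"
    by (simp add: Suc r_def[symmetric] spiral_def)
  also have "\<dots> = of_real (r * spiral_gain r) * (cis (spiral_angle n) * cis (1 - r))"
    by (simp add: mult_ac)
  also have "cis (spiral_angle n) * cis (1 - r) = cis (spiral_angle n + (1 - r))"
    by (rule cis_mult)
  also have "r * spiral_gain r = 1 / (2 - r)"
    using r by (simp add: spiral_gain_def max_absorb1)
  also have "\<dots> = 1 - 1 / (real (Suc n) + 2)"
    by (simp add: r_def field_simps)
  also have "spiral_angle n + (1 - r) = spiral_angle (Suc n)"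
    by (simp add: spiral_angle_def r_def)
  finally show ?case .
qed (simp add: spiral_angle_def)

lemma LIMSEQ_one_div_real_add_2: "(\<lambda>n. 1 / (real n + 2)) \<longlonglongrightarrow> 0"
  using LIMSEQ_Suc[OF LIMSEQ_inverse_real_of_nat] by (simp add: inverse_eq_divide add_ac)

lemma spiral_angle_at_top: "filterlim spiral_angle at_top sequentially"
proof -
  have "spiral_angle n = harm (Suc n) - 1" for n
    by (induction n) (simp_all add: spiral_angle_def harm_altdef inverse_eq_divide add_ac)
  then have "spiral_angle = (\<lambda>n. harm (Suc n) - 1)"
    by auto
  then show ?thesis
    using filterlim_tendsto_add_at_top
        [OF tendsto_const filterlim_compose[OF harm_at_top filterlim_Suc], of "-1"]
    by (simp add: comp_def)
qed

lemma spiral_angle_steps: "(\<lambda>n. spiral_angle (Suc n) - spiral_angle n) \<longlonglongrightarrow> 0"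
  using LIMSEQ_one_div_real_add_2 by (simp add: spiral_angle_def)

lemma norm_spiral_orbit: "norm ((spiral ^^ n) (1/2)) = 1 - 1 / (real n + 2)"
  unfolding spiral_orbit norm_mult norm_of_real by simp

lemma dist_spiral_orbit_circle:
  "dist ((spiral ^^ n) (1/2)) (cis (spiral_angle n)) = 1 / (real n + 2)"
proof -
  have "(spiral ^^ n) (1/2) - cis (spiral_angle n) = - (of_real (1 / (real n + 2)) * cis (spiral_angle n))"
    unfolding spiral_orbit of_real_diff by (simp add: algebra_simps)
  then show ?thesis
    by (simp only: dist_norm norm_minus_cancel norm_mult norm_of_real norm_cis) simp
qed

lemma omega_limit_spiral: "omega_limit spiral (1/2) = sphere 0 1"
proof
  show "omega_limit spiral (1/2) \<subseteq> sphere 0 1"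
  proof
    fix y assume "y \<in> omega_limit spiral (1/2)"
    then obtain r where r: "strict_mono r" "(\<lambda>i. (spiral ^^ r i) (1/2)) \<longlonglongrightarrow> y"
      unfolding omega_limit_def by blast
    have "(\<lambda>n. norm ((spiral ^^ n) (1/2))) \<longlonglongrightarrow> 1"
      using tendsto_diff[OF tendsto_const LIMSEQ_one_div_real_add_2, of 1]
      by (simp add: norm_spiral_orbit)
    then have "(\<lambda>i. norm ((spiral ^^ r i) (1/2))) \<longlonglongrightarrow> 1"
      using LIMSEQ_subseq_LIMSEQ[OF _ r(1)] by (simp add: comp_def)
    then show "y \<in> sphere 0 1"
      using LIMSEQ_unique[OF tendsto_norm[OF r(2)]] by simp
  qed
  show "sphere 0 1 \<subseteq> omega_limit spiral (1/2)"
  proof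
    fix y :: complex assume "y \<in> sphere 0 1"
    then have y: "y = cis (Arg y)"
      using cis_Arg[of y] by (auto simp: sgn_div_norm) (metis norm_zero zero_neq_one)
    have "\<exists>n\<ge>N. dist ((spiral ^^ n) (1/2)) y < \<epsilon>" if "\<epsilon> > 0" for \<epsilon> N
    proof -
      obtain M where M: "M \<ge> N" "1 / (real M + 2) < \<epsilon> / 2"
        using order_tendstoD(2)[OF LIMSEQ_one_div_real_add_2, of "\<epsilon> / 2"] \<open>\<epsilon> > 0\<close>
        unfolding eventually_sequentially by (metis half_gt_zero le_trans nat_le_linear)
      obtain n where n: "n \<ge> M" "dist (cis (spiral_angle n)) y < \<epsilon> / 2"
        using cis_frequently_near[OF spiral_angle_at_top spiral_angle_steps, of "\<epsilon> / 2" M "Arg y"]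
          \<open>\<epsilon> > 0\<close> y by auto
      have "dist ((spiral ^^ n) (1/2)) (cis (spiral_angle n)) \<le> 1 / (real M + 2)"
        using n(1) by (simp add: dist_spiral_orbit_circle frac_le)
      then show ?thesis
        using n M dist_triangle[of "(spiral ^^ n) (1/2)" y "cis (spiral_angle n)"]
        by (intro exI[of _ n]) auto
    qed
    then obtain r where "strict_mono r" "(\<lambda>i. (spiral ^^ r i) (1/2)) \<longlonglongrightarrow> y"
      by (rule subseq_tendsto_if_frequently_near)
    then show "y \<in> omega_limit spiral (1/2)"
      unfolding omega_limit_def by blast
  qed
qed

lemma disc_embedding_into_open:
  fixes V :: "'b::euclidean_space set"
  assumes "open V" "p \<in> V" "DIM('b) \<ge> 2"
  obtains E :: "complex \<Rightarrow> 'b"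
  where "continuous_on (cball 0 1) E" "inj E" "E ` cball 0 1 \<subseteq> V"
proof -
  obtain \<delta> where \<delta>: "\<delta> > 0" "ball p \<delta> \<subseteq> V"
    using assms(1,2) open_contains_ball by blast
  obtain T :: "'b set" where T: "subspace T" "dim T = 2"
    using choose_subspace_of_subspace[of 2 "UNIV :: 'b set"] assms(3) by auto
  obtain L :: "complex \<Rightarrow> 'b" where L: "linear L" "\<And>z. norm (L z) = norm z"
    using isometry_subspaces[of "UNIV :: complex set" T] T by auto
  define E where "E z = p + (\<delta> / 2) *\<^sub>R L z" for z
  have "continuous_on (cball 0 1) E"
    unfolding E_def
    by (intro continuous_intros linear_continuous_on L(1)[unfolded linear_conv_bounded_linear])
  moreover have "inj E"
  proof (rule injI)
    fix z w assume "E z = E w"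
    then have "norm (L (z - w)) = 0"
      using \<delta>(1) by (simp add: E_def linear_diff[OF L(1)])
    then show "z = w" by (simp add: L(2))
  qed
  moreover have "E ` cball 0 1 \<subseteq> V"
  proof
    fix y assume "y \<in> E ` cball 0 1"
    then obtain z where "norm z \<le> 1" "y = E z" by auto
    then have "dist p y \<le> \<delta> / 2"
      using \<delta>(1) by (simp add: E_def dist_norm L(2))
    then show "y \<in> V" using \<delta> by auto
  qed
  ultimately show ?thesis by (rule that)
qed

lemma manifold_contains_disc:
  fixes X :: "'a::metric_space set"
  assumes "topological_manifold X TYPE('n::finite)" "X \<noteq> {}" "CARD('n) \<ge> 2"
  obtains e :: "complex \<Rightarrow> 'a"
  where "continuous_on (cball 0 1) e" "inj_on e (cball 0 1)" "e ` cball 0 1 \<subseteq> X"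
proof -
  obtain x where "x \<in> X" using assms(2) by auto
  then obtain U and V :: "(real^'n) set"
    where U: "openin (top_of_set X) U" "x \<in> U" and V: "open V" "U homeomorphic V"
    using assms(1) unfolding topological_manifold_def by blast
  then obtain g k where gk: "homeomorphism U V g k"
    unfolding homeomorphic_def by blast
  obtain E :: "complex \<Rightarrow> real^'n"
    where E: "continuous_on (cball 0 1) E" "inj E" "E ` cball 0 1 \<subseteq> V"
  proof (rule disc_embedding_into_open[OF V(1)])
    show "g x \<in> V" using gk U(2) by (auto simp: homeomorphism_def)
  qed (use assms(3) in simp_all)
  show ?thesis
  proof (rule that[of "k \<circ> E"])
    show "continuous_on (cball 0 1) (k \<circ> E)"
      using gk E(1,3) by (metis continuous_on_compose continuous_on_subset homeomorphism_def)
    show "inj_on (k \<circ> E) (cball 0 1)"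
    proof (rule inj_onI)
      fix z w assume "z \<in> cball 0 1" "w \<in> cball 0 1" "(k \<circ> E) z = (k \<circ> E) w"
      then have "g (k (E z)) = g (k (E w))" "E z \<in> V" "E w \<in> V" using E(3) by auto
      then have "E z = E w" using gk by (simp add: homeomorphism_def)
      then show "z = w" by (rule injD[OF E(2)])
    qed
    show "(k \<circ> E) ` cball 0 1 \<subseteq> X"
    proof -
      have "k ` V \<subseteq> X" using gk openin_imp_subset[OF U(1)] by (simp add: homeomorphism_def)
      then show ?thesis using E(3) by (metis image_comp image_mono order_trans)
    qed
  qed
qed

lemma complex_Tietze_extension:
  fixes \<phi> :: "'a::metric_space \<Rightarrow> complex"
  assumes "continuous_on K \<phi>" "closedin (top_of_set X) K"
  obtains c where "continuous_on X c" "\<And>w. w \<in> K \<Longrightarrow> c w = \<phi> w"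
proof -
  have normal: "normal_space (top_of_set X)"
    by (intro metrizable_imp_normal_space metrizable_space_subtopology metrizable_space_euclidean)
  have KX: "K \<subseteq> X" using assms(2) by (rule closedin_imp_subset)
  have "continuous_map (subtopology (top_of_set X) K) euclideanreal (\<lambda>w. Re (\<phi> w))"
       "continuous_map (subtopology (top_of_set X) K) euclideanreal (\<lambda>w. Im (\<phi> w))"
    using KX assms(1) by (simp_all add: subtopology_subtopology Int_absorb1
        continuous_map_iff_continuous continuous_on_Re continuous_on_Im)
  then obtain g1 g2
    where "continuous_map (top_of_set X) euclideanreal g1" "\<And>w. w \<in> K \<Longrightarrow> g1 w = Re (\<phi> w)"
      and "continuous_map (top_of_set X) euclideanreal g2" "\<And>w. w \<in> K \<Longrightarrow> g2 w = Im (\<phi> w)"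
    using Tietze_extension_realinterval[OF normal assms(2) is_interval_univ UNIV_not_empty]
    by (metis subset_UNIV)
  then show ?thesis
    by (intro that[of "\<lambda>w. Complex (g1 w) (g2 w)"])
       (auto simp: continuous_map_iff_continuous continuous_on_Complex complex_eq_iff)
qed

lemma disc_retraction_onto_embedding:
  fixes e :: "complex \<Rightarrow> 'a::metric_space"
  assumes "continuous_on (cball 0 1) e" "inj_on e (cball 0 1)" "e ` cball 0 1 \<subseteq> X"
  obtains \<psi> where "continuous_on X \<psi>" "\<psi> ` X \<subseteq> cball 0 1"
    "\<And>z. z \<in> cball 0 1 \<Longrightarrow> \<psi> (e z) = z"
proof -
  define K where "K = e ` cball 0 1"
  obtain ei where "homeomorphism (cball 0 1) K e ei"
    using homeomorphism_compact[OF compact_cball assms(1) K_def[symmetric] assms(2)] by blast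
  then have ei: "continuous_on K ei" "\<And>z. z \<in> cball 0 1 \<Longrightarrow> ei (e z) = z"
    by (auto simp: homeomorphism_def)
  have "closedin (top_of_set X) K"
    unfolding K_def by (intro closed_subset assms(3) compact_imp_closed
        compact_continuous_image assms(1) compact_cball)
  then obtain c where c: "continuous_on X c" "\<And>w. w \<in> K \<Longrightarrow> c w = ei w"
    using complex_Tietze_extension[OF ei(1)] by blast
  show ?thesis
  proof (rule that[of "\<lambda>w. c w / of_real (max 1 (norm (c w)))"])
    show "continuous_on X (\<lambda>w. c w / of_real (max 1 (norm (c w))))"
      by (intro continuous_intros c(1)) auto
    show "(\<lambda>w. c w / of_real (max 1 (norm (c w)))) ` X \<subseteq> cball 0 1"
      by (auto simp: norm_divide)
    show "c (e z) / of_real (max 1 (norm (c (e z)))) = z" if "z \<in> cball 0 1" for z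
      using that c(2)[of "e z"] ei(2)[OF that] by (auto simp: K_def max_def)
  qed
qed

theorem corollary1p6:
  fixes X :: "'a::metric_space set"
  assumes "compact X" and "X \<noteq> {}"
    and "topological_manifold X TYPE('n::finite)"
    and "CARD('n) \<ge> 2"
  shows "\<not> omega_FTP X"
proof -
  obtain e :: "complex \<Rightarrow> 'a"
    where e: "continuous_on (cball 0 1) e" "inj_on e (cball 0 1)" "e ` cball 0 1 \<subseteq> X"
    using manifold_contains_disc[OF assms(3,2,4)] by blast
  obtain \<psi> where \<psi>: "continuous_on X \<psi>" "\<psi> ` X \<subseteq> cball 0 1"
      "\<And>z. z \<in> cball 0 1 \<Longrightarrow> \<psi> (e z) = z"
    using disc_retraction_onto_embedding[OF e] by blast
  show ?thesis
  proof (rule not_omega_FTP_if_retract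
      [OF compact_cball continuous_on_spiral spiral_maps_disc _ _ _ e(1,3) \<psi>])
    show "(1/2 :: complex) \<in> cball 0 1" by simp
    show "infinite (omega_limit spiral (1/2))"
      unfolding omega_limit_spiral by (rule infinite_unit_circle)
    show "totally_periodic spiral (omega_limit spiral (1/2))"
      unfolding omega_limit_spiral totally_periodic_def periodic_point_def
      by (intro ballI exI[of _ 1]) (simp add: spiral_fixes_circle)
  qed
qed

end
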